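(* Let $G$ be a finitely generated group, let $N_1,N_2$ be normal subgroups of $G$ such that every element of $N_1$ commutes with every element of $N_2$, let $\Gamma_i=G/N_i$ ($i=1,2$), let $Q=G/N_1N_2$, and let $S$ be a non-abelian finite simple group. Then $$|\mathrm{Epi}(G,S)|=|\mathrm{Epi}(\Gamma_1,S)|+|\mathrm{Epi}(\Gamma_2,S)|-|\mathrm{Epi}(Q,S)|.$$
   Context: For a group $G$ and finite group $S$, $\mathrm{Epi}(G,S)$ denotes the set of surjective homomorphisms $G\to S$ (finite when $G$ is finitely generated). *)

theory Defs
  imports "HOL-Algebra.Algebra"
begin

text \<open>Epi(G,S): surjective homomorphisms from G onto S, as functions on the
carrier of G (extensional, so that distinct elements are distinct maps).\<close>
definition Epi :: "('a, 'c) monoid_scheme \<Rightarrow> ('b, 'd) monoid_scheme \<Rightarrow> ('a \<Rightarrow> 'b) set" where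
  "Epi G S = epi G S \<inter> extensional (carrier G)"

definition finitely_generated_group :: "('a, 'c) monoid_scheme \<Rightarrow> bool" where
  "finitely_generated_group G \<longleftrightarrow>
     (\<exists>A. finite A \<and> A \<subseteq> carrier G \<and> generate G A = carrier G)"

end

theory Submission
  imports Defs
begin

text \<open>An epimorphism \<open>f\<close> from \<open>G\<close> onto a simple group \<open>S\<close> maps the normal subgroups
\<open>N\<^sub>1\<close>, \<open>N\<^sub>2\<close> onto normal subgroups of \<open>S\<close> that commute elementwise; if both images were
all of \<open>S\<close>, then \<open>S\<close> would be abelian. Hence every epimorphism kills \<open>N\<^sub>1\<close> or \<open>N\<^sub>2\<close>, and it
kills both iff it kills \<open>N\<^sub>1N\<^sub>2\<close>. Epimorphisms killing a normal subgroup \<open>N\<close> correspond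
bijectively to epimorphisms from \<open>G/N\<close>, so the formula is inclusion-exclusion.\<close>

lemma (in group) subgroup_equalizer:
  assumes "group H" "f \<in> hom G H" "g \<in> hom G H"
  shows "subgroup {x \<in> carrier G. f x = g x} G"
proof -
  interpret f: group_hom G H f using assms by (simp add: group_hom_def group_hom_axioms_def)
  interpret g: group_hom G H g using assms by (simp add: group_hom_def group_hom_axioms_def)
  show ?thesis by (rule subgroupI) auto
qed

lemma (in group) hom_eq_on_generate:
  assumes "group H" "f \<in> hom G H" "g \<in> hom G H"
    and "A \<subseteq> carrier G" "\<And>a. a \<in> A \<Longrightarrow> f a = g a"
    and "x \<in> generate G A"
  shows "f x = g x"
  using generate_subgroup_incl[OF _ subgroup_equalizer[OF assms(1-3)]] assms(4-6) by blast

lemma (in group) finite_Epi: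
  assumes "group S" "finite (carrier S)" "finitely_generated_group G"
  shows "finite (Epi G S)"
proof -
  obtain A where A: "finite A" "A \<subseteq> carrier G" "generate G A = carrier G"
    using assms(3) unfolding finitely_generated_group_def by blast
  have "inj_on (\<lambda>f. restrict f A) (Epi G S)"
  proof (rule inj_onI)
    fix f g assume fg: "f \<in> Epi G S" "g \<in> Epi G S" "restrict f A = restrict g A"
    have "f a = g a" if "a \<in> A" for a
      using fg(3) that by (metis restrict_apply')
    then have "f x = g x" if "x \<in> carrier G" for x
      using hom_eq_on_generate[OF assms(1) _ _ A(2), of f g x] fg(1,2) that A(3)
      by (auto simp: Epi_def epi_def)
    then show "f = g"
      using fg by (intro extensionalityI[where A="carrier G"]) (auto simp: Epi_def)
  qed
  moreover have "(\<lambda>f. restrict f A) ` Epi G S \<subseteq> A \<rightarrow>\<^sub>E carrier S"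
    using A(2) by (auto simp: Epi_def epi_def hom_def)
  then have "finite ((\<lambda>f. restrict f A) ` Epi G S)"
    by (rule finite_subset) (simp add: A(1) assms(2) finite_PiE)
  ultimately show ?thesis by (blast intro: finite_imageD)
qed

lemma (in normal) image_rcoset_if_kernel:
  assumes "group S" "f \<in> hom G S" "H \<subseteq> kernel G S f" "a \<in> carrier G"
  shows "f ` (H #> a) = {f a}"
proof -
  interpret S: group S by fact
  have "f (n \<otimes> a) = f a" if "n \<in> H" for n
    using that assms hom_mult[OF assms(2)] hom_in_carrier[OF assms(2)]
    by (auto simp: kernel_def)
  then show ?thesis
    using rcos_self[OF assms(4) is_subgroup] by (auto simp: r_coset_def)
qed

lemma (in normal) FactGroup_lift_hom:
  assumes "group S" "f \<in> hom G S" "H \<subseteq> kernel G S f"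
  shows "(\<lambda>C\<in>carrier (G Mod H). the_elem (f ` C)) \<in> hom (G Mod H) S"
proof (rule homI)
  fix C assume C: "C \<in> carrier (G Mod H)"
  then obtain a where "a \<in> carrier G" "C = H #> a" by (auto simp: carrier_FactGroup)
  then show "(\<lambda>C\<in>carrier (G Mod H). the_elem (f ` C)) C \<in> carrier S"
    using C image_rcoset_if_kernel[OF assms] hom_in_carrier[OF assms(2)] by simp
next
  fix C D assume "C \<in> carrier (G Mod H)" "D \<in> carrier (G Mod H)"
  then obtain a b where ab: "a \<in> carrier G" "b \<in> carrier G" "C = H #> a" "D = H #> b"
    by (auto simp: carrier_FactGroup)
  then have "C \<otimes>\<^bsub>G Mod H\<^esub> D = H #> (a \<otimes> b)" by (simp add: rcos_sum)
  with ab show "(\<lambda>C\<in>carrier (G Mod H). the_elem (f ` C)) (C \<otimes>\<^bsub>G Mod H\<^esub> D) =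
      (\<lambda>C\<in>carrier (G Mod H). the_elem (f ` C)) C \<otimes>\<^bsub>S\<^esub> (\<lambda>C\<in>carrier (G Mod H). the_elem (f ` C)) D"
    using image_rcoset_if_kernel[OF assms] hom_mult[OF assms(2)]
    by (simp add: carrier_FactGroup)
qed

lemma (in normal) Epi_FactGroup_pullback:
  assumes S: "group S" and g: "g \<in> Epi (G Mod H) S"
  shows "(\<lambda>a\<in>carrier G. g (H #> a)) \<in> {f \<in> Epi G S. H \<subseteq> kernel G S f}"
proof -
  have hom: "g \<in> hom (G Mod H) S" and surj: "g ` carrier (G Mod H) = carrier S"
    using g by (auto simp: Epi_def epi_def)
  have "(\<lambda>a\<in>carrier G. g (H #> a)) \<in> hom G S"
    using hom_compose[OF r_coset_hom_Mod hom] by (simp add: compose_def)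
  moreover have "(\<lambda>a\<in>carrier G. g (H #> a)) ` carrier G = carrier S"
    using surj by (simp add: carrier_FactGroup image_image)
  moreover have "g (H #> n) = \<one>\<^bsub>S\<^esub>" if "n \<in> H" for n
    using that hom_one[OF hom factorgroup_is_group S] by (simp add: rcos_const)
  ultimately show ?thesis
    by (auto simp: Epi_def epi_def kernel_def)
qed

lemma (in normal) Epi_FactGroup_lift:
  assumes S: "group S" and f: "f \<in> {f \<in> Epi G S. H \<subseteq> kernel G S f}"
  shows "(\<lambda>C\<in>carrier (G Mod H). the_elem (f ` C)) \<in> Epi (G Mod H) S"
proof -
  have hom: "f \<in> hom G S" and surj: "f ` carrier G = carrier S" and ker: "H \<subseteq> kernel G S f"
    using f by (auto simp: Epi_def epi_def)
  have "(\<lambda>C\<in>carrier (G Mod H). the_elem (f ` C)) ` carrier (G Mod H) = f ` carrier G"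
    using image_rcoset_if_kernel[OF S hom ker] by (auto simp: carrier_FactGroup image_image)
  then show ?thesis
    using FactGroup_lift_hom[OF S hom ker] surj by (simp add: Epi_def epi_def)
qed

theorem (in normal) bij_betw_Epi_FactGroup:
  assumes S: "group S"
  shows "bij_betw (\<lambda>g. \<lambda>a\<in>carrier G. g (H #> a))
           (Epi (G Mod H) S) {f \<in> Epi G S. H \<subseteq> kernel G S f}"
proof (rule bij_betwI[where g = "\<lambda>f. \<lambda>C\<in>carrier (G Mod H). the_elem (f ` C)"])
  show "(\<lambda>C\<in>carrier (G Mod H). the_elem ((\<lambda>a\<in>carrier G. g (H #> a)) ` C)) = g"
    if g: "g \<in> Epi (G Mod H) S" for g
  proof (rule extensionalityI[where A = "carrier (G Mod H)"])
    fix C assume "C \<in> carrier (G Mod H)"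
    then obtain a where a: "a \<in> carrier G" "C = H #> a" by (auto simp: carrier_FactGroup)
    have "(\<lambda>a\<in>carrier G. g (H #> a)) \<in> hom G S"
      "H \<subseteq> kernel G S (\<lambda>a\<in>carrier G. g (H #> a))"
      using Epi_FactGroup_pullback[OF S g] by (auto simp: Epi_def epi_def)
    from image_rcoset_if_kernel[OF S this a(1)] show "(\<lambda>C\<in>carrier (G Mod H). the_elem ((\<lambda>a\<in>carrier G. g (H #> a)) ` C)) C = g C"
      using a by (simp add: carrier_FactGroup)
  qed (use g in \<open>auto simp: Epi_def\<close>)
  show "(\<lambda>a\<in>carrier G. (\<lambda>C\<in>carrier (G Mod H). the_elem (f ` C)) (H #> a)) = f"
    if "f \<in> {f \<in> Epi G S. H \<subseteq> kernel G S f}" for f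
    using that image_rcoset_if_kernel[OF S, of f]
    by (intro extensionalityI[where A = "carrier G"]) (auto simp: Epi_def epi_def carrier_FactGroup)
qed (use Epi_FactGroup_pullback[OF S] Epi_FactGroup_lift[OF S] in blast)+

lemma (in simple_group) trivial_of_commuting_normal_subgroups:
  assumes "\<not> comm_group G" "H \<lhd> G" "K \<lhd> G"
    and "\<And>x y. x \<in> H \<Longrightarrow> y \<in> K \<Longrightarrow> x \<otimes> y = y \<otimes> x"
  shows "H = {\<one>} \<or> K = {\<one>}"
proof (rule ccontr)
  assume "\<not> (H = {\<one>} \<or> K = {\<one>})"
  then have "H = carrier G" "K = carrier G"
    using no_real_normal_subgroup assms(2,3) by blast+
  then have "comm_group G"
    using assms(4) by (intro group_comm_groupI) auto
  with assms(1) show False ..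
qed

lemma (in group) Epi_kills_one_of_commuting_normal_subgroups:
  assumes "simple_group S" "\<not> comm_group S" "f \<in> Epi G S"
    and "N1 \<lhd> G" "N2 \<lhd> G" "\<And>x y. x \<in> N1 \<Longrightarrow> y \<in> N2 \<Longrightarrow> x \<otimes> y = y \<otimes> x"
  shows "N1 \<subseteq> kernel G S f \<or> N2 \<subseteq> kernel G S f"
proof -
  interpret S: simple_group S by fact
  interpret f: group_hom G S f
    using assms(3) by (auto simp: group_hom_def group_hom_axioms_def Epi_def epi_def)
  have surj: "f ` carrier G = carrier S" using assms(3) by (simp add: Epi_def epi_def)
  have sub: "N1 \<subseteq> carrier G" "N2 \<subseteq> carrier G"
    using assms(4,5) normal_imp_subgroup subgroup.subset by blast+
  have "f x \<otimes>\<^bsub>S\<^esub> f y = f y \<otimes>\<^bsub>S\<^esub> f x" if "x \<in> N1" "y \<in> N2" for x y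
    using that sub assms(6)[OF that] f.hom_mult by (metis subsetD)
  then have "f ` N1 = {\<one>\<^bsub>S\<^esub>} \<or> f ` N2 = {\<one>\<^bsub>S\<^esub>}"
    using S.trivial_of_commuting_normal_subgroups[OF assms(2)]
      normal.surj_hom_normal_subgroup[OF assms(4) f.group_hom_axioms surj]
      normal.surj_hom_normal_subgroup[OF assms(5) f.group_hom_axioms surj]
    by blast
  then show ?thesis using sub by (auto simp: kernel_def)
qed

lemma (in group_hom) set_mult_subset_kernel_iff:
  assumes "subgroup N1 G" "subgroup N2 G"
  shows "N1 <#> N2 \<subseteq> kernel G H h \<longleftrightarrow> N1 \<subseteq> kernel G H h \<and> N2 \<subseteq> kernel G H h"
proof
  have "N1 \<subseteq> N1 <#> N2" "N2 \<subseteq> N1 <#> N2"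
    using subgroup.one_closed[OF assms(1)] subgroup.one_closed[OF assms(2)]
      subgroup.subset[OF assms(1)] subgroup.subset[OF assms(2)]
    unfolding set_mult_def by (force, force)
  then show "N1 <#> N2 \<subseteq> kernel G H h \<Longrightarrow> N1 \<subseteq> kernel G H h \<and> N2 \<subseteq> kernel G H h"
    by blast
next
  assume "N1 \<subseteq> kernel G H h \<and> N2 \<subseteq> kernel G H h"
  then have "N1 <#> N2 \<subseteq> kernel G H h <#> kernel G H h" by (simp add: mono_set_mult)
  then show "N1 <#> N2 \<subseteq> kernel G H h" by (simp add: G.subgroup_mult_id subgroup_kernel)
qed

theorem mainTheorem4:
  fixes G :: "('a, 'c) monoid_scheme" and S :: "('b, 'd) monoid_scheme"
    and N1 N2 :: "'a set"
  assumes "group G"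
    and "finitely_generated_group G"
    and "N1 \<lhd> G" and "N2 \<lhd> G"
    and "\<forall>x\<in>N1. \<forall>y\<in>N2. x \<otimes>\<^bsub>G\<^esub> y = y \<otimes>\<^bsub>G\<^esub> x"
    and "simple_group S"
    and "finite (carrier S)"
    and "\<not> comm_group S"
  shows "int (card (Epi G S)) =
           int (card (Epi (G Mod N1) S)) + int (card (Epi (G Mod N2) S))
           - int (card (Epi (G Mod (N1 <#>\<^bsub>G\<^esub> N2)) S))"
proof -
  interpret group G by fact
  have S: "group S" using assms(6) by (simp add: simple_group_def)
  define Epi_killing where "Epi_killing N = {f \<in> Epi G S. N \<subseteq> kernel G S f}" for N
  have card_quotient: "card (Epi (G Mod N) S) = card (Epi_killing N)" if "N \<lhd> G" for N
    using bij_betw_same_card[OF normal.bij_betw_Epi_FactGroup[OF that S]]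
    by (simp add: Epi_killing_def)
  have "Epi G S = Epi_killing N1 \<union> Epi_killing N2"
    using Epi_kills_one_of_commuting_normal_subgroups[OF assms(6,8) _ assms(3,4)] assms(5)
    by (auto simp: Epi_killing_def)
  moreover have "Epi_killing N1 \<inter> Epi_killing N2 = Epi_killing (N1 <#>\<^bsub>G\<^esub> N2)"
  proof -
    have "N1 <#>\<^bsub>G\<^esub> N2 \<subseteq> kernel G S f \<longleftrightarrow> N1 \<subseteq> kernel G S f \<and> N2 \<subseteq> kernel G S f"
      if "f \<in> Epi G S" for f
    proof (rule group_hom.set_mult_subset_kernel_iff)
      show "group_hom G S f"
        using that S by (auto simp: Epi_def epi_def group_hom_def group_hom_axioms_def)
    qed (use assms(3,4) normal_imp_subgroup in auto)
    then show ?thesis by (auto simp: Epi_killing_def)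
  qed
  moreover have "finite (Epi_killing N1)" "finite (Epi_killing N2)"
    using finite_Epi[OF S assms(7,2)] by (simp_all add: Epi_killing_def)
  ultimately have "card (Epi G S) + card (Epi_killing (N1 <#>\<^bsub>G\<^esub> N2)) =
      card (Epi_killing N1) + card (Epi_killing N2)"
    by (simp add: card_Un_Int)
  then show ?thesis
    using card_quotient assms(3,4) normal_subgroup_set_mult_closed[OF assms(3,4)] by simp
qed

end
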